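(* If $M'$ is a minor of a finite matroid $M$, then $\mathrm{bd}(M')\le\mathrm{bd}(M)$.
   Context: For a rooted tree $T$, $\|T\|$ is its number of edges and its depth is the number of edges of a longest root-to-leaf path. A depth-decomposition of a finite matroid $M$ (rank function $r$) is a pair $(T,f)$ with $T$ a rooted tree and $f:M\to V(T)$ such that (1) $r(M)=\|T\|$ and (2) $r(X)\le\|T^*(X)\|$ for every $X\subseteq M$, where $T^*(X)$ is the union of the paths from the root to all vertices of $f(X)$. The branch-depth $\mathrm{bd}(M)$ is the minimum depth of $T$ over all depth-decompositions $(T,f)$ of $M$. *)

theory Defs
  imports Main
begin

type_synonym 'a matroid = "'a set \<times> ('a set \<Rightarrow> nat)"

definition matroid :: "'a matroid \<Rightarrow> bool" where
  "matroid M \<longleftrightarrow> (case M of (E, r) \<Rightarrow>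
     finite E \<and>
     (\<forall>X. X \<subseteq> E \<longrightarrow> r X \<le> card X) \<and>
     (\<forall>X Y. X \<subseteq> Y \<and> Y \<subseteq> E \<longrightarrow> r X \<le> r Y) \<and>
     (\<forall>X Y. X \<subseteq> E \<and> Y \<subseteq> E \<longrightarrow> r (X \<union> Y) + r (X \<inter> Y) \<le> r X + r Y))"

text \<open>Minor: M' = (M / C) \ D for disjoint C, D \<subseteq> E. The contraction M / C has
rank function Y \<mapsto> r (Y \<union> C) - r C; deletion restricts the ground set.\<close>

definition minor :: "'a matroid \<Rightarrow> 'a matroid \<Rightarrow> bool" where
  "minor M' M \<longleftrightarrow> matroid M \<and>
     (\<exists>C D. C \<subseteq> fst M \<and> D \<subseteq> fst M \<and> C \<inter> D = {} \<and>
        fst M' = fst M - C - D \<and>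
        (\<forall>Y. Y \<subseteq> fst M' \<longrightarrow> snd M' Y = snd M (Y \<union> C) - snd M C))"

text \<open>A rooted tree with vertex set V \<subseteq> nat, root rt and parent map par:
every vertex reaches the root by iterating par. The tree edges are the pairs
(v, par v) for v \<in> V - {rt}.\<close>

definition rooted_tree :: "nat set \<Rightarrow> nat \<Rightarrow> (nat \<Rightarrow> nat) \<Rightarrow> bool" where
  "rooted_tree V rt par \<longleftrightarrow> finite V \<and> rt \<in> V \<and>
     (\<forall>v \<in> V - {rt}. par v \<in> V) \<and>
     (\<forall>v \<in> V. \<exists>k. (par ^^ k) v = rt)"

definition vdepth :: "nat \<Rightarrow> (nat \<Rightarrow> nat) \<Rightarrow> nat \<Rightarrow> nat" where
  "vdepth rt par v = (LEAST k. (par ^^ k) v = rt)"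

definition root_path :: "nat \<Rightarrow> (nat \<Rightarrow> nat) \<Rightarrow> nat \<Rightarrow> nat set" where
  "root_path rt par v = {(par ^^ i) v | i. i \<le> vdepth rt par v}"

definition tree_depth :: "nat set \<Rightarrow> nat \<Rightarrow> (nat \<Rightarrow> nat) \<Rightarrow> nat" where
  "tree_depth V rt par = Max (vdepth rt par ` V)"

text \<open>Number of edges of T*(X): each non-root vertex of the union of the root
paths contributes exactly one edge (to its parent).\<close>
definition subtree_edges ::
  "nat \<Rightarrow> (nat \<Rightarrow> nat) \<Rightarrow> ('a \<Rightarrow> nat) \<Rightarrow> 'a set \<Rightarrow> nat" where
  "subtree_edges rt par f X = card ((\<Union>x \<in> X. root_path rt par (f x)) - {rt})"

definition depth_decomposition ::
  "'a matroid \<Rightarrow> nat set \<Rightarrow> nat \<Rightarrow> (nat \<Rightarrow> nat) \<Rightarrow> ('a \<Rightarrow> nat) \<Rightarrow> bool" where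
  "depth_decomposition M V rt par f \<longleftrightarrow>
     rooted_tree V rt par \<and> (\<forall>x \<in> fst M. f x \<in> V) \<and>
     snd M (fst M) = card V - 1 \<and>
     (\<forall>X. X \<subseteq> fst M \<longrightarrow> snd M X \<le> subtree_edges rt par f X)"

definition branch_depth :: "'a matroid \<Rightarrow> nat" where
  "branch_depth M = (LEAST d. \<exists>V rt par f.
      depth_decomposition M V rt par f \<and> tree_depth V rt par = d)"

end

theory Submission
  imports Defs
begin

text \<open>It suffices to delete or contract a single element e. If this does not lower the rank
of the ground set, the old decomposition still works, because the new rank function is pointwise
at most the old one. Otherwise the rank drops by one and e is not a loop, so f e is not the root.
Contracting the tree edge from u = f e to its parent (redirecting the children of u and the
elements sitting at u to the parent of u) removes one edge of the tree without increasing its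
depth, and removes at most one edge from each subtree T*(X). When it does remove one, u lies on
T*(X), hence T*(X \<union> {e}) = T*(X), and the rank gap r'(X) + 1 \<le> r(X \<union> {e}) pays for the lost edge.\<close>

section \<open>Rooted trees\<close>

definition reaches_root :: "nat \<Rightarrow> (nat \<Rightarrow> nat) \<Rightarrow> nat \<Rightarrow> bool" where
  "reaches_root rt par v \<longleftrightarrow> (\<exists>k. (par ^^ k) v = rt)"

lemma reaches_root_root [simp]: "reaches_root rt par rt"
  unfolding reaches_root_def by (rule exI[of _ 0]) simp

lemma vdepth_root [simp]: "vdepth rt par rt = 0"
  by (simp add: vdepth_def)

lemma root_path_eq_image: "root_path rt par v = (\<lambda>i. (par ^^ i) v) ` {..vdepth rt par v}"
  unfolding root_path_def by auto

lemma root_path_root [simp]: "root_path rt par rt = {rt}"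
  by (simp add: root_path_eq_image)

lemma reaches_root_if_rooted_tree: "rooted_tree V rt par \<Longrightarrow> v \<in> V \<Longrightarrow> reaches_root rt par v"
  unfolding rooted_tree_def reaches_root_def by blast

lemma reaches_root_step: "reaches_root rt par (par v) \<Longrightarrow> reaches_root rt par v"
  unfolding reaches_root_def by (metis funpow_Suc_right o_apply)

context
  fixes rt par v
  assumes reaches: "reaches_root rt par v" and not_root: "v \<noteq> rt"
begin

lemma reaches_root_parent: "reaches_root rt par (par v)"
proof -
  obtain k where "(par ^^ k) v = rt" using reaches unfolding reaches_root_def by blast
  with not_root obtain k' where "(par ^^ Suc k') v = rt" by (cases k) auto
  then show ?thesis unfolding reaches_root_def funpow_Suc_right o_apply by blast
qed

lemma vdepth_parent: "vdepth rt par v = Suc (vdepth rt par (par v))"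
proof -
  obtain k where "(par ^^ k) v = rt" using reaches unfolding reaches_root_def by blast
  then have "(LEAST k. (par ^^ k) v = rt) = Suc (LEAST k. (par ^^ Suc k) v = rt)"
    by (rule Least_Suc) (use not_root in simp)
  then show ?thesis unfolding vdepth_def funpow_Suc_right o_apply .
qed

lemma root_path_parent: "root_path rt par v = insert v (root_path rt par (par v))"
  by (simp add: root_path_eq_image vdepth_parent atMost_Suc_eq_insert_0 image_image
      funpow_Suc_right del: funpow.simps)

end

lemma reaches_root_induct [consumes 1, case_names root step]:
  assumes "reaches_root rt par v"
    and "P rt"
    and "\<And>v. reaches_root rt par v \<Longrightarrow> v \<noteq> rt \<Longrightarrow> P (par v) \<Longrightarrow> P v"
  shows "P v"
proof -
  have "reaches_root rt par v \<Longrightarrow> vdepth rt par v = n \<Longrightarrow> P v" for n v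
  proof (induction n arbitrary: v)
    case 0
    then show ?case using assms(2) vdepth_parent by (metis nat.distinct(1))
  next
    case (Suc n)
    then show ?case
      using assms(2,3) reaches_root_parent vdepth_parent by (metis nat.inject)
  qed
  then show ?thesis using assms(1) by blast
qed

lemma root_path_subset:
  assumes "reaches_root rt par v" "w \<in> root_path rt par v"
  shows "root_path rt par w \<subseteq> root_path rt par v"
  using assms
proof (induction arbitrary: w rule: reaches_root_induct)
  case root
  then show ?case by simp
next
  case (step v)
  have "root_path rt par v = insert v (root_path rt par (par v))"
    by (rule root_path_parent[OF step(1,2)])
  with step.prems step.IH show ?case by auto
qed

lemma root_path_subset_vertices:
  assumes tree: "rooted_tree V rt par" and "v \<in> V"
  shows "root_path rt par v \<subseteq> V"
  using reaches_root_if_rooted_tree[OF assms] \<open>v \<in> V\<close>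
proof (induction rule: reaches_root_induct)
  case root
  then show ?case by simp
next
  case (step v)
  have "par v \<in> V" using tree step unfolding rooted_tree_def by blast
  then show ?case using step root_path_parent[OF step(1,2)] by simp
qed

definition redirect :: "(nat \<Rightarrow> nat) \<Rightarrow> nat \<Rightarrow> nat \<Rightarrow> nat" where
  "redirect par u w = (if w = u then par u else w)"

lemma redirect_root_path:
  assumes "u \<noteq> rt" "reaches_root rt par v"
  defines "par' \<equiv> redirect par u \<circ> par"
  shows "reaches_root rt par' (redirect par u v)
    \<and> root_path rt par' (redirect par u v) = root_path rt par v - {u}
    \<and> vdepth rt par' (redirect par u v) \<le> vdepth rt par v"
  using assms(2)
proof (induction rule: reaches_root_induct)
  case root
  then show ?case using assms(1) by (simp add: redirect_def)
next
  case (step v)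
  note parent = reaches_root_parent[OF step(1,2)] vdepth_parent[OF step(1,2)]
    root_path_parent[OF step(1,2)]
  show ?case
  proof (cases "v = u")
    case True
    then have "redirect par u v = par v" "redirect par u (par v) = par v"
      using parent(2) by (auto simp: redirect_def)
    moreover have "root_path rt par v - {u} = root_path rt par (par v) - {u}"
      using parent(3) True by simp
    ultimately show ?thesis using step.IH parent(2) by simp
  next
    case False
    then have v: "redirect par u v = v" "par' v = redirect par u (par v)"
      by (simp_all add: redirect_def par'_def)
    have reaches': "reaches_root rt par' v"
      using step.IH v(2) reaches_root_step[of rt par' v] by simp
    have "root_path rt par' v = insert v (root_path rt par' (par' v))"
      by (rule root_path_parent[OF reaches' step(2)])
    moreover have "vdepth rt par' v = Suc (vdepth rt par' (par' v))"
      by (rule vdepth_parent[OF reaches' step(2)])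
    ultimately show ?thesis
      using v step.IH False parent(2,3) reaches' by auto
  qed
qed

context
  fixes V rt par u
  assumes tree: "rooted_tree V rt par" and u: "u \<in> V" "u \<noteq> rt"
begin

private lemma parent_neq: "par u \<noteq> u"
  using vdepth_parent[OF reaches_root_if_rooted_tree[OF tree u(1)] u(2)] by auto

lemma redirect_in_vertices: "w \<in> V \<Longrightarrow> redirect par u w \<in> V - {u}"
  using tree u parent_neq unfolding rooted_tree_def redirect_def by auto

lemma rooted_tree_redirect: "rooted_tree (V - {u}) rt (redirect par u \<circ> par)"
  unfolding rooted_tree_def
proof (intro conjI ballI)
  show "finite (V - {u})" "rt \<in> V - {u}" using tree u unfolding rooted_tree_def by auto
next
  fix v assume "v \<in> V - {u} - {rt}"
  then show "(redirect par u \<circ> par) v \<in> V - {u}"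
    using tree redirect_in_vertices unfolding rooted_tree_def by auto
next
  fix v assume v: "v \<in> V - {u}"
  then have "reaches_root rt (redirect par u \<circ> par) (redirect par u v)"
    using redirect_root_path[OF u(2) reaches_root_if_rooted_tree[OF tree]] by blast
  then show "\<exists>k. ((redirect par u \<circ> par) ^^ k) v = rt"
    using v unfolding reaches_root_def redirect_def by auto
qed

lemma tree_depth_redirect: "tree_depth (V - {u}) rt (redirect par u \<circ> par) \<le> tree_depth V rt par"
  unfolding tree_depth_def
proof (rule Max.boundedI)
  show "finite (vdepth rt (redirect par u \<circ> par) ` (V - {u}))"
    "vdepth rt (redirect par u \<circ> par) ` (V - {u}) \<noteq> {}"
    using tree u unfolding rooted_tree_def by auto
next
  fix d assume "d \<in> vdepth rt (redirect par u \<circ> par) ` (V - {u})"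
  then obtain v where v: "v \<in> V - {u}" "d = vdepth rt (redirect par u \<circ> par) v" by blast
  then have "d \<le> vdepth rt par v"
    using redirect_root_path[OF u(2) reaches_root_if_rooted_tree[OF tree], of v]
    by (simp add: redirect_def)
  also have "\<dots> \<le> Max (vdepth rt par ` V)"
    using tree v unfolding rooted_tree_def by simp
  finally show "d \<le> Max (vdepth rt par ` V)" .
qed

lemma subtree_edges_redirect:
  assumes "f ` X \<subseteq> V"
  shows "subtree_edges rt (redirect par u \<circ> par) (redirect par u \<circ> f) X
    = card ((\<Union>x\<in>X. root_path rt par (f x)) - {rt} - {u})"
proof -
  have "root_path rt (redirect par u \<circ> par) (redirect par u (f x)) = root_path rt par (f x) - {u}"
    if "x \<in> X" for x
    using redirect_root_path[OF u(2) reaches_root_if_rooted_tree[OF tree]] assms that by blast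
  then show ?thesis unfolding subtree_edges_def by (auto intro!: arg_cong[where f = card])
qed

end

section \<open>Matroid rank functions\<close>

context
  fixes E :: "'a set" and r :: "'a set \<Rightarrow> nat"
  assumes matroid: "matroid (E, r)"
begin

lemma matroid_finite: "finite E"
  and rank_le_card: "X \<subseteq> E \<Longrightarrow> r X \<le> card X"
  and rank_mono: "X \<subseteq> Y \<Longrightarrow> Y \<subseteq> E \<Longrightarrow> r X \<le> r Y"
  and rank_submodular: "X \<subseteq> E \<Longrightarrow> Y \<subseteq> E \<Longrightarrow> r (X \<union> Y) + r (X \<inter> Y) \<le> r X + r Y"
  using matroid unfolding matroid_def by auto

lemma rank_empty: "r {} = 0"
  using rank_le_card[of "{}"] by simp

lemma rank_singleton_le: "e \<in> E \<Longrightarrow> r {e} \<le> 1"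
  using rank_le_card[of "{e}"] by simp

lemma rank_union_singleton_le: "X \<subseteq> E \<Longrightarrow> e \<in> E \<Longrightarrow> r (X \<union> {e}) \<le> r X + r {e}"
  using rank_submodular[of X "{e}"] rank_mono[of "X \<inter> {e}" X] by simp

lemma matroid_restrict: "E' \<subseteq> E \<Longrightarrow> matroid (E', r)"
  unfolding matroid_def
  by (auto intro!: rank_le_card rank_mono rank_submodular rev_finite_subset[OF matroid_finite])

lemma matroid_contract_element:
  assumes e: "e \<in> E"
  shows "matroid (E - {e}, \<lambda>Y. r (Y \<union> {e}) - r {e})"
proof -
  have low: "r {e} \<le> r (Z \<union> {e})" if "Z \<subseteq> E - {e}" for Z
    using rank_mono[of "{e}" "Z \<union> {e}"] that e by auto
  have "r (X \<union> {e}) - r {e} \<le> card X" if "X \<subseteq> E - {e}" for X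
    using rank_union_singleton_le[of X e] rank_le_card[of X] Diff_subset[of E "{e}"] that e
    by (meson le_diff_conv order_trans)
  moreover have "r (X \<union> {e}) - r {e} \<le> r (Y \<union> {e}) - r {e}" if "X \<subseteq> Y" "Y \<subseteq> E - {e}" for X Y
  proof -
    have "X \<union> {e} \<subseteq> Y \<union> {e}" "Y \<union> {e} \<subseteq> E" using that e by auto
    then show ?thesis using rank_mono[of "X \<union> {e}" "Y \<union> {e}"] by linarith
  qed
  moreover have "r (X \<union> Y \<union> {e}) - r {e} + (r (X \<inter> Y \<union> {e}) - r {e})
      \<le> r (X \<union> {e}) - r {e} + (r (Y \<union> {e}) - r {e})" if "X \<subseteq> E - {e}" "Y \<subseteq> E - {e}" for X Y
  proof -
    have "(X \<union> {e}) \<union> (Y \<union> {e}) = X \<union> Y \<union> {e}" "(X \<union> {e}) \<inter> (Y \<union> {e}) = X \<inter> Y \<union> {e}"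
      by auto
    then have "r (X \<union> Y \<union> {e}) + r (X \<inter> Y \<union> {e}) \<le> r (X \<union> {e}) + r (Y \<union> {e})"
      using rank_submodular[of "X \<union> {e}" "Y \<union> {e}"] that e by auto
    moreover have "r {e} \<le> r (X \<union> Y \<union> {e})" "r {e} \<le> r (X \<inter> Y \<union> {e})"
      using low[of "X \<union> Y"] low[of "X \<inter> Y"] that by auto
    ultimately show ?thesis by linarith
  qed
  ultimately show ?thesis
    using matroid_finite unfolding matroid_def by (simp only: prod.case finite_Diff) blast
qed

end

section \<open>Depth-decompositions of deletions and contractions\<close>

lemma depth_decomposition_cong:
  assumes "depth_decomposition (E, r) V rt par f" "\<And>Y. Y \<subseteq> E \<Longrightarrow> r' Y = r Y"
  shows "depth_decomposition (E, r') V rt par f"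
  using assms unfolding depth_decomposition_def by auto

lemma depth_decomposition_weaken_rank:
  assumes "depth_decomposition (E, r) V rt par f" "E' \<subseteq> E" "r' E' = r E"
    "\<And>Y. Y \<subseteq> E' \<Longrightarrow> r' Y \<le> r Y"
  shows "depth_decomposition (E', r') V rt par f"
proof -
  have "r' X \<le> subtree_edges rt par f X" if "X \<subseteq> E'" for X
    using assms(1,2) assms(4)[OF that] that unfolding depth_decomposition_def prod.sel
    by (meson order_trans subset_trans)
  then show ?thesis using assms unfolding depth_decomposition_def by auto
qed

lemma depth_decomposition_image_ne_root:
  assumes "depth_decomposition (E, r) V rt par f" "e \<in> E" "r {e} \<noteq> 0"
  shows "f e \<noteq> rt"
proof
  assume "f e = rt"
  then have "subtree_edges rt par f {e} = 0" unfolding subtree_edges_def by simp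
  moreover have "r {e} \<le> subtree_edges rt par f {e}"
    using assms(1,2) unfolding depth_decomposition_def by simp
  ultimately show False using assms(3) by simp
qed

lemma subtree_edges_union_covered:
  assumes tree: "rooted_tree V rt par" and "f ` X \<subseteq> V"
    and covered: "f e \<in> (\<Union>x\<in>X. root_path rt par (f x))"
  shows "subtree_edges rt par f (X \<union> {e}) = subtree_edges rt par f X"
proof -
  obtain x where x: "x \<in> X" "f e \<in> root_path rt par (f x)" using covered by blast
  then have "reaches_root rt par (f x)"
    using reaches_root_if_rooted_tree[OF tree] assms(2) by blast
  then have "root_path rt par (f e) \<subseteq> root_path rt par (f x)"
    using root_path_subset x(2) by blast
  then have "(\<Union>y\<in>X \<union> {e}. root_path rt par (f y)) = (\<Union>y\<in>X. root_path rt par (f y))"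
    using x(1) by blast
  then show ?thesis unfolding subtree_edges_def by simp
qed

lemma depth_decomposition_contract_vertex:
  assumes dd: "depth_decomposition (E, r) V rt par f" and matroid: "matroid (E, r)"
    and e: "e \<in> E"
    and rank_drop: "r' (E - {e}) + 1 = r E"
    and rank_gap: "\<And>Y. Y \<subseteq> E - {e} \<Longrightarrow> r' Y + 1 \<le> r (Y \<union> {e})"
  shows "\<exists>V' rt' par' f'. depth_decomposition (E - {e}, r') V' rt' par' f'
    \<and> tree_depth V' rt' par' \<le> tree_depth V rt par"
proof -
  define u where "u = f e"
  have tree: "rooted_tree V rt par" and f_V: "\<And>x. x \<in> E \<Longrightarrow> f x \<in> V"
    and rank_E: "r E = card V - 1"
    and bound: "\<And>X. X \<subseteq> E \<Longrightarrow> r X \<le> subtree_edges rt par f X"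
    using dd unfolding depth_decomposition_def by auto
  have "r {e} \<noteq> 0" using rank_gap[of "{}"] by simp
  then have u: "u \<in> V" "u \<noteq> rt"
    using depth_decomposition_image_ne_root[OF dd e] f_V e unfolding u_def by auto
  have finite_V: "finite V" using tree unfolding rooted_tree_def by blast
  have "r' X \<le> subtree_edges rt (redirect par u \<circ> par) (redirect par u \<circ> f) X"
    if X: "X \<subseteq> E - {e}" for X
  proof -
    define P where "P = (\<Union>x\<in>X. root_path rt par (f x)) - {rt}"
    have f_X: "f ` X \<subseteq> V" using f_V X by auto
    have edges': "subtree_edges rt (redirect par u \<circ> par) (redirect par u \<circ> f) X = card (P - {u})"
      unfolding P_def by (rule subtree_edges_redirect[OF tree u f_X])
    have "finite P"
      using root_path_subset_vertices[OF tree] f_X finite_V unfolding P_def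
      by (meson Diff_subset UN_least finite_subset image_subset_iff)
    have "r X \<le> card P" using bound[of X] X unfolding subtree_edges_def P_def by auto
    moreover have "r (X \<union> {e}) \<le> r X + 1"
      using rank_union_singleton_le[OF matroid _ e, of X] rank_singleton_le[OF matroid e] X
      by (meson Diff_subset add_left_mono order_trans subset_trans)
    moreover have "r' X + 1 \<le> r (X \<union> {e})" using rank_gap[OF X] .
    moreover have "r (X \<union> {e}) \<le> card P" if "u \<in> P"
    proof -
      have "subtree_edges rt par f (X \<union> {e}) = card P"
        using subtree_edges_union_covered[OF tree f_X] that
        unfolding P_def u_def subtree_edges_def by auto
      then show ?thesis using bound[of "X \<union> {e}"] X e by auto
    qed
    ultimately show ?thesis using edges' \<open>finite P\<close> by (cases "u \<in> P") auto
  qed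
  moreover have "card (V - {u}) = card V - 1" using finite_V u by simp
  ultimately have "depth_decomposition (E - {e}, r') (V - {u}) rt
      (redirect par u \<circ> par) (redirect par u \<circ> f)"
    unfolding depth_decomposition_def
    using rooted_tree_redirect[OF tree u] redirect_in_vertices[OF tree u] f_V rank_drop rank_E
    by auto
  then show ?thesis using tree_depth_redirect[OF tree u] by blast
qed

lemma depth_decomposition_delete_element:
  assumes matroid: "matroid (E, r)" and dd: "depth_decomposition (E, r) V rt par f"
    and e: "e \<in> E"
  shows "\<exists>V' rt' par' f'. depth_decomposition (E - {e}, r) V' rt' par' f'
    \<and> tree_depth V' rt' par' \<le> tree_depth V rt par"
proof (cases "r (E - {e}) = r E")
  case True
  have "depth_decomposition (E - {e}, r) V rt par f"
    by (rule depth_decomposition_weaken_rank[OF dd Diff_subset True order_refl])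
  then show ?thesis by blast
next
  case False
  have E: "E - {e} \<union> {e} = E" using e by blast
  have "r E \<le> r (E - {e}) + 1"
    using rank_union_singleton_le[OF matroid, of "E - {e}" e] rank_singleton_le[OF matroid e] E e
    by simp
  moreover have "r (E - {e}) \<le> r E" using rank_mono[OF matroid Diff_subset order_refl] .
  ultimately have rank_drop: "r (E - {e}) + 1 = r E" using False by linarith
  have "r Y + 1 \<le> r (Y \<union> {e})" if "Y \<subseteq> E - {e}" for Y
  proof -
    have "Y \<union> {e} \<subseteq> E" using that e by blast
    then have "r ((Y \<union> {e}) \<union> (E - {e})) + r ((Y \<union> {e}) \<inter> (E - {e}))
        \<le> r (Y \<union> {e}) + r (E - {e})"
      using rank_submodular[OF matroid] by blast
    moreover have "(Y \<union> {e}) \<union> (E - {e}) = E" "(Y \<union> {e}) \<inter> (E - {e}) = Y"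
      using that e by auto
    ultimately show ?thesis using rank_drop by simp
  qed
  then show ?thesis
    by (rule depth_decomposition_contract_vertex[where r' = r, OF dd matroid e rank_drop])
qed

lemma depth_decomposition_contract_element:
  assumes matroid: "matroid (E, r)" and dd: "depth_decomposition (E, r) V rt par f"
    and e: "e \<in> E"
  shows "\<exists>V' rt' par' f'. depth_decomposition (E - {e}, \<lambda>Y. r (Y \<union> {e}) - r {e}) V' rt' par' f'
    \<and> tree_depth V' rt' par' \<le> tree_depth V rt par"
proof -
  have E: "E - {e} \<union> {e} = E" using e by blast
  have low: "r {e} \<le> r (Y \<union> {e})" if "Y \<subseteq> E - {e}" for Y
    using rank_mono[OF matroid, of "{e}" "Y \<union> {e}"] that e by blast
  show ?thesis
  proof (cases "r {e} = 0")
    case True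
    have "r (Y \<union> {e}) \<le> r Y" if "Y \<subseteq> E - {e}" for Y
      using rank_union_singleton_le[OF matroid _ e, of Y] True that by auto
    then have "depth_decomposition (E - {e}, \<lambda>Y. r (Y \<union> {e}) - r {e}) V rt par f"
      by (intro depth_decomposition_weaken_rank[OF dd Diff_subset])
        (simp_all add: True insert_absorb[OF e])
    then show ?thesis by blast
  next
    case False
    then have one: "r {e} = 1" using rank_singleton_le[OF matroid e] by simp
    then have "r (E - {e} \<union> {e}) - r {e} + 1 = r E"
      using low[of "E - {e}"] E by simp
    moreover have "r (Y \<union> {e}) - r {e} + 1 \<le> r (Y \<union> {e})" if "Y \<subseteq> E - {e}" for Y
      using low[OF that] one by simp
    ultimately show ?thesis by (rule depth_decomposition_contract_vertex[OF dd matroid e])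
  qed
qed

lemma depth_decomposition_delete:
  assumes "matroid (E, r)" "D \<subseteq> E" "depth_decomposition (E, r) V rt par f"
  shows "\<exists>V' rt' par' f'. depth_decomposition (E - D, r) V' rt' par' f'
    \<and> tree_depth V' rt' par' \<le> tree_depth V rt par"
proof -
  have "finite D" using assms(1,2) matroid_finite finite_subset by blast
  then show ?thesis using assms
  proof (induction D arbitrary: E V rt par f)
    case empty
    then show ?case by auto
  next
    case (insert e D)
    have e: "e \<in> E" and D: "D \<subseteq> E - {e}" using insert.prems(2) insert.hyps(2) by auto
    obtain V1 rt1 par1 f1 where dd1: "depth_decomposition (E - {e}, r) V1 rt1 par1 f1"
      and depth1: "tree_depth V1 rt1 par1 \<le> tree_depth V rt par"
      using depth_decomposition_delete_element[OF insert.prems(1,3) e] by blast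
    have "matroid (E - {e}, r)" by (rule matroid_restrict[OF insert.prems(1) Diff_subset])
    then obtain V2 rt2 par2 f2 where dd2: "depth_decomposition (E - {e} - D, r) V2 rt2 par2 f2"
      and depth2: "tree_depth V2 rt2 par2 \<le> tree_depth V1 rt1 par1"
      using insert.IH[OF _ D dd1] by blast
    have "E - {e} - D = E - insert e D" by blast
    then show ?case using dd2 le_trans[OF depth2 depth1] by auto
  qed
qed

lemma depth_decomposition_contract:
  assumes "matroid (E, r)" "C \<subseteq> E" "depth_decomposition (E, r) V rt par f"
  shows "\<exists>V' rt' par' f'. depth_decomposition (E - C, \<lambda>Y. r (Y \<union> C) - r C) V' rt' par' f'
    \<and> tree_depth V' rt' par' \<le> tree_depth V rt par"
proof -
  have "finite C" using assms(1,2) matroid_finite finite_subset by blast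
  then show ?thesis using assms
  proof (induction C arbitrary: E r V rt par f)
    case empty
    then show ?case using rank_empty[OF empty.prems(1)] by auto
  next
    case (insert e C)
    define r1 where "r1 = (\<lambda>Y. r (Y \<union> {e}) - r {e})"
    have e: "e \<in> E" and C: "C \<subseteq> E - {e}" using insert.prems(2) insert.hyps(2) by auto
    obtain V1 rt1 par1 f1 where dd1: "depth_decomposition (E - {e}, r1) V1 rt1 par1 f1"
      and depth1: "tree_depth V1 rt1 par1 \<le> tree_depth V rt par"
      using depth_decomposition_contract_element[OF insert.prems(1,3) e] unfolding r1_def by blast
    have "matroid (E - {e}, r1)"
      unfolding r1_def by (rule matroid_contract_element[OF insert.prems(1) e])
    then obtain V2 rt2 par2 f2
      where dd2: "depth_decomposition (E - {e} - C, \<lambda>Y. r1 (Y \<union> C) - r1 C) V2 rt2 par2 f2"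
      and depth2: "tree_depth V2 rt2 par2 \<le> tree_depth V1 rt1 par1"
      using insert.IH[OF _ C dd1] by blast
    have "r (Y \<union> insert e C) - r (insert e C) = r1 (Y \<union> C) - r1 C"
      if "Y \<subseteq> E - {e} - C" for Y
    proof -
      have "Y \<union> insert e C \<subseteq> E" using that insert.prems(2) by auto
      then have "r {e} \<le> r (insert e C)" "r (insert e C) \<le> r (Y \<union> insert e C)"
        by (auto intro: rank_mono[OF insert.prems(1)])
      moreover have "Y \<union> C \<union> {e} = Y \<union> insert e C" "C \<union> {e} = insert e C" by auto
      ultimately show ?thesis unfolding r1_def by simp
    qed
    then have "depth_decomposition (E - {e} - C, \<lambda>Y. r (Y \<union> insert e C) - r (insert e C))
        V2 rt2 par2 f2"
      by (rule depth_decomposition_cong[OF dd2])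
    moreover have "E - {e} - C = E - insert e C" by blast
    ultimately show ?case using le_trans[OF depth2 depth1] by auto
  qed
qed

lemma funpow_decrement: "((\<lambda>i::nat. i - 1) ^^ k) n = n - k"
  by (induction k) auto

lemma reaches_root_decrement: "reaches_root 0 (\<lambda>i::nat. i - 1) n"
  unfolding reaches_root_def funpow_decrement by (rule exI[of _ n]) simp

lemma root_path_decrement: "root_path 0 (\<lambda>i::nat. i - 1) n = {0..n}"
proof (induction n)
  case 0
  then show ?case by simp
next
  case (Suc n)
  then show ?case
    using root_path_parent[OF reaches_root_decrement] by (simp add: atLeast0_atMost_Suc)
qed

lemma depth_decomposition_exists:
  assumes "matroid (E, r)"
  shows "\<exists>V rt par f. depth_decomposition (E, r) V rt par f"
proof -
  let ?par = "\<lambda>i::nat. i - 1"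
  have "rooted_tree {0..r E} 0 ?par"
    using reaches_root_decrement unfolding rooted_tree_def reaches_root_def by auto
  moreover have "r X \<le> subtree_edges 0 ?par (\<lambda>_. r E) X" if "X \<subseteq> E" for X
  proof (cases "X = {}")
    case True
    then show ?thesis using rank_empty[OF assms] by simp
  next
    case False
    then have "subtree_edges 0 ?par (\<lambda>_. r E) X = r E"
      unfolding subtree_edges_def root_path_decrement by simp
    then show ?thesis using rank_mono[OF assms that] by simp
  qed
  ultimately have "depth_decomposition (E, r) {0..r E} 0 ?par (\<lambda>_. r E)"
    unfolding depth_decomposition_def by simp
  then show ?thesis by blast
qed

lemma branch_depth_le:
  "depth_decomposition M V rt par f \<Longrightarrow> branch_depth M \<le> tree_depth V rt par"
  unfolding branch_depth_def by (rule Least_le) blast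

lemma branch_depth_attained:
  assumes "matroid M"
  obtains V rt par f where "depth_decomposition M V rt par f" "tree_depth V rt par = branch_depth M"
proof -
  have "\<exists>d V rt par f. depth_decomposition M V rt par f \<and> tree_depth V rt par = d"
    using depth_decomposition_exists[of "fst M" "snd M"] assms by simp
  from LeastI_ex[OF this]
  have "\<exists>V rt par f. depth_decomposition M V rt par f \<and> tree_depth V rt par = branch_depth M"
    unfolding branch_depth_def .
  then show ?thesis using that by blast
qed

theorem proposition3p3:
  fixes M M' :: "'a matroid"
  assumes "matroid M" and "minor M' M"
  shows "branch_depth M' \<le> branch_depth M"
proof -
  obtain E r where M: "M = (E, r)" by fastforce
  with assms obtain C D where CD: "C \<subseteq> E" "D \<subseteq> E" "C \<inter> D = {}" "fst M' = E - C - D"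
    and rank': "\<And>Y. Y \<subseteq> fst M' \<Longrightarrow> snd M' Y = r (Y \<union> C) - r C"
    unfolding minor_def by auto
  have matroid: "matroid (E, r)" using assms(1) M by simp
  obtain V rt par f where dd: "depth_decomposition (E, r) V rt par f"
    and optimal: "tree_depth V rt par = branch_depth M"
    using branch_depth_attained[OF assms(1)] M by blast
  obtain V1 rt1 par1 f1 where dd1: "depth_decomposition (E - D, r) V1 rt1 par1 f1"
    and depth1: "tree_depth V1 rt1 par1 \<le> tree_depth V rt par"
    using depth_decomposition_delete[OF matroid CD(2) dd] by blast
  have "matroid (E - D, r)" "C \<subseteq> E - D" using matroid_restrict[OF matroid] CD(1,3) by auto
  then obtain V2 rt2 par2 f2
    where dd2: "depth_decomposition (E - D - C, \<lambda>Y. r (Y \<union> C) - r C) V2 rt2 par2 f2"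
    and depth2: "tree_depth V2 rt2 par2 \<le> tree_depth V1 rt1 par1"
    using depth_decomposition_contract[OF _ _ dd1] by blast
  have ground: "fst M' = E - D - C" using CD(4) by blast
  have "depth_decomposition (fst M', snd M') V2 rt2 par2 f2"
    unfolding ground by (rule depth_decomposition_cong[OF dd2]) (simp add: rank' ground)
  then have "depth_decomposition M' V2 rt2 par2 f2" by simp
  then show ?thesis using branch_depth_le depth1 depth2 optimal by fastforce
qed

end
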